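(* Let $\mathscr{Y}\in\mathbb{R}^{m\times1\times n_3}$ and $\mathscr{V}\in\mathbb{R}^{n\times ms\times n_3}$ be such that $\mathscr{V}^T\diamondsuit\mathscr{V}=\mathscr{I}_{mmn_3}$. Then $\|\mathscr{V}\star(\mathscr{Y}\circledast\mathscr{I}_{ssn_3})\|_F=\|\mathscr{Y}\|_{T_{\ell_2}}$.
   Context: All tensors are real third-order arrays; $\|\cdot\|_F$ is the Frobenius norm (square root of the sum of squares of all entries). $\widehat{\mathscr{A}}=\mathscr{A}\times_3F_{n_3}$ denotes the tensor obtained by applying the discrete Fourier transform ($F_{n_3}$ with entries $\omega^{(i-1)(j-1)}$, $\omega=e^{-2\pi\mathrm{i}/n_3}$) to each tube; its frontal slices $\hat A^{(k)}$ are the Fourier slices. T-product: $\mathscr{A}\star\mathscr{B}$ has Fourier slices $\hat A^{(k)}\hat B^{(k)}$. Transpose $\mathscr{A}^T$: transpose each frontal slice and reverse the order of frontal slices $2,\dots,n_3$. $\mathscr{I}_{nnn_3}$: first frontal slice $I_n$, others zero. T-Kronecker product $\mathscr{A}\circledast\mathscr{B}$: Fourier slices $\hat A^{(k)}\otimes\hat B^{(k)}$. T-trace: the tube in $\mathbb{R}^{1\times1\times n_3}$ whose $k$-th Fourier slice is the trace of the $k$-th Fourier slice. Tubal inner product $\langle\mathscr{X},\mathscr{Y}\rangle_T=\text{T-trace}(\mathscr{X}^T\star\mathscr{Y})$. T-diamond product: for $\mathscr{V}=[\mathscr{V}_1,\dots,\mathscr{V}_m]$ with blocks $\mathscr{V}_i\in\mathbb{R}^{n\times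 s\times n_3}$, $\mathscr{V}^T\diamondsuit\mathscr{V}\in\mathbb{R}^{m\times m\times n_3}$ has $(i,j)$ tube $\langle\mathscr{V}_i,\mathscr{V}_j\rangle_T$. T-$\ell_2$ norm of $\mathscr{Y}\in\mathbb{R}^{m\times1\times n_3}$: $\|\mathscr{Y}\|_{T_{\ell_2}}=\frac{1}{\sqrt{n_3}}\big(\sum_{k=1}^{n_3}\|\hat Y^{(k)}\|_2^2\big)^{1/2}$, where $\hat Y^{(k)}\in\mathbb{C}^m$ are the Fourier slices. *)

theory Defs
  imports Complex_Main
begin

text \<open>A real third-order tensor of size p x q x n3 is represented as a function
  of three natural-number indices (row, column, frontal slice), 0-based;
  only entries with indices below the respective dimensions are meaningful.\<close>

type_synonym tensor = "nat \<Rightarrow> nat \<Rightarrow> nat \<Rightarrow> real"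
type_synonym ctensor = "nat \<Rightarrow> nat \<Rightarrow> nat \<Rightarrow> complex"

definition omega :: "nat \<Rightarrow> complex" where
  "omega n3 = cis (- 2 * pi / real n3)"

definition fhat :: "nat \<Rightarrow> tensor \<Rightarrow> ctensor" where
  "fhat n3 A = (\<lambda>i j k. \<Sum>l<n3. complex_of_real (A i j l) * omega n3 ^ (l * k))"

text \<open>Inverse DFT along tubes (real part; applied only to Fourier data of real tensors).\<close>
definition ifft :: "nat \<Rightarrow> ctensor \<Rightarrow> tensor" where
  "ifft n3 C = (\<lambda>i j l. Re ((\<Sum>k<n3. C i j k * inverse (omega n3) ^ (l * k)) / of_nat n3))"

definition tprod :: "nat \<Rightarrow> nat \<Rightarrow> tensor \<Rightarrow> tensor \<Rightarrow> tensor" where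
  "tprod n3 r A B = ifft n3 (\<lambda>i j k. \<Sum>t<r. fhat n3 A i t k * fhat n3 B t j k)"

definition ttrans :: "nat \<Rightarrow> tensor \<Rightarrow> tensor" where
  "ttrans n3 A = (\<lambda>i j l. A j i ((n3 - l) mod n3))"

definition tid :: tensor where
  "tid = (\<lambda>i j l. if i = j \<and> l = 0 then 1 else 0)"

text \<open>T-Kronecker product of A (p x q x n3) with B (r x t x n3): Fourier slices are the
  Kronecker products; entry (i*r+a, j*t+b) of the Kronecker product is A(i,j)*B(a,b).\<close>
definition tkron :: "nat \<Rightarrow> nat \<Rightarrow> nat \<Rightarrow> tensor \<Rightarrow> tensor \<Rightarrow> tensor" where
  "tkron n3 r t A B = ifft n3 (\<lambda>i j k. fhat n3 A (i div r) (j div t) k * fhat n3 B (i mod r) (j mod t) k)"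

definition ttrace :: "nat \<Rightarrow> nat \<Rightarrow> tensor \<Rightarrow> (nat \<Rightarrow> real)" where
  "ttrace n3 p X = (\<lambda>l. ifft n3 (\<lambda>_ _ k. \<Sum>i<p. fhat n3 X i i k) 0 0 l)"

definition tinner :: "nat \<Rightarrow> nat \<Rightarrow> nat \<Rightarrow> tensor \<Rightarrow> tensor \<Rightarrow> (nat \<Rightarrow> real)" where
  "tinner n3 n s X Y = ttrace n3 s (tprod n3 n (ttrans n3 X) Y)"

definition tblock :: "nat \<Rightarrow> nat \<Rightarrow> tensor \<Rightarrow> tensor" where
  "tblock s i V = (\<lambda>a b l. V a (i * s + b) l)"

definition tdiamond :: "nat \<Rightarrow> nat \<Rightarrow> nat \<Rightarrow> tensor \<Rightarrow> tensor" where
  "tdiamond n3 n s V = (\<lambda>i j l. tinner n3 n s (tblock s i V) (tblock s j V) l)"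

definition frob :: "nat \<Rightarrow> nat \<Rightarrow> nat \<Rightarrow> tensor \<Rightarrow> real" where
  "frob p q n3 A = sqrt (\<Sum>i<p. \<Sum>j<q. \<Sum>l<n3. (A i j l)\<^sup>2)"

definition tl2 :: "nat \<Rightarrow> nat \<Rightarrow> tensor \<Rightarrow> real" where
  "tl2 m n3 Y = (1 / sqrt (real n3)) * sqrt (\<Sum>k<n3. \<Sum>i<m. (cmod (fhat n3 Y i 0 k))\<^sup>2)"

end

theory Submission
  imports Defs "HOL-Analysis.Cartesian_Euclidean_Space"
begin

text \<open>
  Write \<open>v\<^sub>i\<^sub>c\<close> for the tube \<open>V a (i s + b)\<close>, \<open>c = (a, b)\<close>, and \<open>y\<^sub>i\<close> for the tube \<open>Y i 0\<close>.
  Lateral slice \<open>c\<close> of \<open>V \<star> (Y \<circledast> I)\<close> is \<open>\<Sum>\<^sub>i v\<^sub>i\<^sub>c * y\<^sub>i\<close> (cyclic convolution), and the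
  hypothesis says that the cyclic cross-correlations satisfy
  \<open>\<Sum>\<^sub>c corr(v\<^sub>i\<^sub>c, v\<^sub>j\<^sub>c)(d) = \<delta>\<^sub>i\<^sub>j \<delta>\<^sub>d\<^sub>0\<close>, the transpose in the tubal inner product being what
  turns a convolution into a correlation. The DFT turns convolution into a product and correlation
  into a product with a conjugate, so at every frequency \<open>k\<close> the vectors \<open>(v\<^sub>i\<^sub>c(k))\<^sub>c\<close> of
  Fourier coefficients, \<open>i < m\<close>, are orthonormal. Parseval's identity writes the squared Frobenius
  norm as \<open>1/n\<^sub>3 \<Sum>\<^sub>k \<Sum>\<^sub>c |\<Sum>\<^sub>i v\<^sub>i\<^sub>c(k) y\<^sub>i(k)|\<^sup>2\<close>, and orthonormality collapses this to
  \<open>1/n\<^sub>3 \<Sum>\<^sub>k \<Sum>\<^sub>i |y\<^sub>i(k)|\<^sup>2\<close>, the squared T-l2 norm of \<open>Y\<close>.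
\<close>

lemma mod_add_mod_diff_cancel:
  assumes "c \<le> (N::nat)" "p < N"
  shows "((p + c) mod N + N - c) mod N = p"
proof -
  have "((p + c) mod N + N - c) mod N = ((p + c) mod N + (N - c)) mod N"
    using assms(1) by simp
  also have "\<dots> = (p + N) mod N"
    unfolding mod_add_left_eq using assms(1) by simp
  finally show ?thesis using assms(2) by simp
qed

lemma sum_mod_shift:
  fixes h :: "nat \<Rightarrow> 'a::comm_monoid_add"
  assumes "0 < N"
  shows "(\<Sum>p<N. h ((p + c) mod N)) = (\<Sum>p<N. h p)"
proof -
  define c' where "c' = c mod N"
  have "c' < N" using assms by (simp add: c'_def)
  have "(\<Sum>p<N. h ((p + c) mod N)) = (\<Sum>p<N. h ((p + c') mod N))"
    by (simp add: c'_def mod_add_right_eq)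
  also have "\<dots> = (\<Sum>p<N. h p)"
    by (rule sum.reindex_bij_witness[where i = "\<lambda>p. (p + N - c') mod N" and j = "\<lambda>p. (p + c') mod N"])
       (use \<open>c' < N\<close> mod_add_mod_diff_cancel[of "N - c'" N] in \<open>auto simp: mod_add_mod_diff_cancel\<close>)
  finally show ?thesis .
qed

lemma sum_mod_reflect:
  fixes h :: "nat \<Rightarrow> 'a::comm_monoid_add"
  shows "(\<Sum>p<N. h ((N - p) mod N)) = (\<Sum>p<N. h p)"
  by (rule sum.reindex_bij_witness[where i = "\<lambda>p. (N - p) mod N" and j = "\<lambda>p. (N - p) mod N"])
     (auto simp: mod_if)

definition dft :: "nat \<Rightarrow> (nat \<Rightarrow> real) \<Rightarrow> nat \<Rightarrow> complex" where
  "dft N f k = (\<Sum>p<N. of_real (f p) * omega N ^ (p * k))"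

definition idft :: "nat \<Rightarrow> (nat \<Rightarrow> complex) \<Rightarrow> nat \<Rightarrow> complex" where
  "idft N F l = (\<Sum>k<N. F k * inverse (omega N) ^ (l * k)) / of_nat N"

definition cconv :: "nat \<Rightarrow> (nat \<Rightarrow> real) \<Rightarrow> (nat \<Rightarrow> real) \<Rightarrow> nat \<Rightarrow> real" where
  "cconv N f g l = (\<Sum>p<N. f p * g ((l + (N - p)) mod N))"

definition ccorr :: "nat \<Rightarrow> (nat \<Rightarrow> real) \<Rightarrow> (nat \<Rightarrow> real) \<Rightarrow> nat \<Rightarrow> real" where
  "ccorr N f g d = (\<Sum>q<N. f q * g ((q + d) mod N))"

lemma omega_power: "omega N ^ j = cis (- 2 * pi * real j / real N)"
  unfolding omega_def by (simp add: DeMoivre mult.commute)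

lemma omega_power_N:
  assumes "0 < N"
  shows "omega N ^ N = 1"
  using assms by (simp add: omega_power cis_multiple_2pi[of "-1", simplified])

lemma omega_power_mod:
  assumes "0 < N"
  shows "omega N ^ (a mod N) = omega N ^ a"
proof -
  have "omega N ^ a = (omega N ^ N) ^ (a div N) * omega N ^ (a mod N)"
    by (metis div_mult_mod_eq power_add power_mult mult.commute)
  then show ?thesis using assms by (simp add: omega_power_N)
qed

lemma omega_power_mod_mult:
  assumes "0 < N"
  shows "omega N ^ (a mod N * k) = omega N ^ (a * k)"
  by (simp add: power_mult omega_power_mod[OF assms])

lemma cnj_omega_power: "cnj (omega N ^ j) = inverse (omega N) ^ j"
  by (simp add: omega_def cis_cnj power_inverse[symmetric] flip: cis_inverse)

lemma omega_power_N_minus: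
  assumes "0 < N" "q \<le> N"
  shows "omega N ^ (N - q) = cnj (omega N ^ q)"
proof -
  have "omega N ^ q * omega N ^ (N - q) = 1"
    using assms by (simp add: omega_power_N flip: power_add)
  then have "omega N ^ (N - q) = inverse (omega N ^ q)"
    by (simp add: inverse_unique)
  then show ?thesis
    unfolding cnj_omega_power power_inverse .
qed

lemma omega_power_inj:
  assumes "p < N" "q < N" "omega N ^ p = omega N ^ q"
  shows "p = q"
proof -
  have "0 < N" using assms by simp
  have "cis (2 * pi * real p / real N) = cis (2 * pi * real q / real N)"
    using arg_cong[OF assms(3), of cnj] by (simp add: omega_power cis_cnj)
  then show ?thesis
    using bij_betw_roots_unity[OF \<open>0 < N\<close>] assms(1,2) by (auto simp: bij_betw_def inj_on_def)
qed

lemma dft_orthogonality: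
  assumes "p < N" "q < N"
  shows "(\<Sum>k<N. omega N ^ (p * k) * inverse (omega N) ^ (q * k)) = (if p = q then of_nat N else 0)"
proof -
  have "0 < N" using assms by simp
  define z where "z = omega N ^ p / omega N ^ q"
  have "omega N ^ (p * k) * inverse (omega N) ^ (q * k) = z ^ k" for k
    by (simp add: z_def power_mult power_mult_distrib divide_inverse power_inverse)
  moreover have "z ^ N = 1"
  proof -
    have "z ^ N = (omega N ^ N) ^ p / (omega N ^ N) ^ q"
      by (simp add: z_def power_divide flip: power_mult) (simp add: mult.commute)
    then show ?thesis using \<open>0 < N\<close> by (simp add: omega_power_N)
  qed
  moreover have "z = 1 \<longleftrightarrow> p = q"
    using omega_power_inj[OF assms] by (auto simp: z_def omega_def)
  ultimately show ?thesis
    by (cases "p = q") (simp_all add: geometric_sum)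
qed

lemma dft_cong: "(\<And>p. p < N \<Longrightarrow> f p = g p) \<Longrightarrow> dft N f k = dft N g k"
  by (simp add: dft_def)

lemma dft_sum: "dft N (\<lambda>l. \<Sum>c\<in>C. F c l) k = (\<Sum>c\<in>C. dft N (F c) k)"
  unfolding dft_def of_real_sum sum_distrib_right by (rule sum.swap)

lemma idft_sum: "idft N (\<lambda>k. \<Sum>t\<in>T. F t k) l = (\<Sum>t\<in>T. idft N (F t) l)"
  unfolding idft_def sum_distrib_right sum_divide_distrib[symmetric] by (subst sum.swap) simp

lemma idft_dft:
  assumes "l < N"
  shows "idft N (dft N f) l = of_real (f l)"
proof -
  have "(\<Sum>k<N. dft N f k * inverse (omega N) ^ (l * k))
      = (\<Sum>p<N. of_real (f p) * (\<Sum>k<N. omega N ^ (p * k) * inverse (omega N) ^ (l * k)))"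
    unfolding dft_def sum_distrib_right sum_distrib_left by (subst sum.swap) (simp add: mult.assoc)
  also have "\<dots> = (\<Sum>p<N. if p = l then of_real (f p) * of_nat N else 0)"
    using assms by (intro sum.cong) (simp_all add: dft_orthogonality)
  also have "\<dots> = of_real (f l) * of_nat N"
    using assms by simp
  finally show ?thesis
    using assms by (simp add: idft_def)
qed

lemma dft_cconv:
  assumes "0 < N"
  shows "dft N (cconv N f g) k = dft N f k * dft N g k"
proof -
  have shift: "(\<Sum>l<N. of_real (g ((l + (N - p)) mod N)) * omega N ^ (l * k))
      = omega N ^ (p * k) * dft N g k" if "p < N" for p
  proof -
    have "(\<Sum>l<N. of_real (g ((l + (N - p)) mod N)) * omega N ^ (l * k))
        = (\<Sum>l<N. of_real (g (((l + p) mod N + (N - p)) mod N)) * omega N ^ ((l + p) mod N * k))"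
      by (rule sum_mod_shift[OF assms, symmetric])
    also have "\<dots> = (\<Sum>l<N. omega N ^ (p * k) * (of_real (g l) * omega N ^ (l * k)))"
      using that by (intro sum.cong)
        (simp_all add: mod_add_mod_diff_cancel omega_power_mod_mult[OF assms] add_mult_distrib power_add)
    finally show ?thesis
      by (simp add: dft_def sum_distrib_left)
  qed
  have "dft N (cconv N f g) k
      = (\<Sum>p<N. of_real (f p) * (\<Sum>l<N. of_real (g ((l + (N - p)) mod N)) * omega N ^ (l * k)))"
    unfolding dft_def cconv_def of_real_sum of_real_mult sum_distrib_right sum_distrib_left
    by (subst sum.swap) (simp add: mult.assoc)
  also have "\<dots> = (\<Sum>p<N. of_real (f p) * omega N ^ (p * k) * dft N g k)"
    using shift by (intro sum.cong) (simp_all add: mult.assoc)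
  finally show ?thesis
    by (simp add: dft_def sum_distrib_right)
qed

lemma dft_ccorr:
  assumes "0 < N"
  shows "dft N (ccorr N f g) k = cnj (dft N f k) * dft N g k"
proof -
  have shift: "(\<Sum>d<N. of_real (g ((q + d) mod N)) * omega N ^ (d * k))
      = cnj (omega N ^ (q * k)) * dft N g k" if "q < N" for q
  proof -
    have omega_shift: "omega N ^ ((d + (N - q)) mod N * k) = cnj (omega N ^ (q * k)) * omega N ^ (d * k)" for d
    proof -
      have "omega N ^ ((d + (N - q)) mod N * k) = omega N ^ (d * k) * (omega N ^ (N - q)) ^ k"
        by (simp only: omega_power_mod_mult[OF assms]) (simp only: add_mult_distrib power_add power_mult)
      also have "\<dots> = cnj (omega N ^ (q * k)) * omega N ^ (d * k)"
        using that by (simp add: omega_power_N_minus[OF assms] power_mult)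
      finally show ?thesis .
    qed
    have "(\<Sum>d<N. of_real (g ((q + d) mod N)) * omega N ^ (d * k))
        = (\<Sum>d<N. of_real (g ((q + (d + (N - q)) mod N) mod N)) * omega N ^ ((d + (N - q)) mod N * k))"
      by (rule sum_mod_shift[OF assms, symmetric])
    also have "\<dots> = (\<Sum>d<N. cnj (omega N ^ (q * k)) * (of_real (g d) * omega N ^ (d * k)))"
      using that by (intro sum.cong refl, simp only: omega_shift) (simp add: mod_add_right_eq)
    finally show ?thesis
      by (simp add: dft_def sum_distrib_left)
  qed
  have "dft N (ccorr N f g) k
      = (\<Sum>q<N. of_real (f q) * (\<Sum>d<N. of_real (g ((q + d) mod N)) * omega N ^ (d * k)))"
    unfolding dft_def ccorr_def of_real_sum of_real_mult sum_distrib_right sum_distrib_left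
    by (subst sum.swap) (simp add: mult.assoc)
  also have "\<dots> = (\<Sum>q<N. of_real (f q) * cnj (omega N ^ (q * k)) * dft N g k)"
    using shift by (intro sum.cong) (simp_all add: mult.assoc)
  finally show ?thesis
    by (simp add: dft_def sum_distrib_right)
qed

text \<open>Parseval's identity: \<open>|dft N f k|\<^sup>2\<close> is the DFT of the autocorrelation of \<open>f\<close>, and summing
  over \<open>k\<close> recovers, by inversion, its value at 0.\<close>

lemma sum_cmod_dft_squared:
  assumes "0 < N"
  shows "(\<Sum>k<N. (cmod (dft N f k))\<^sup>2) = real N * (\<Sum>p<N. (f p)\<^sup>2)"
proof -
  have "of_real (\<Sum>k<N. (cmod (dft N f k))\<^sup>2) = (\<Sum>k<N. dft N (ccorr N f f) k)"
    unfolding of_real_sum complex_norm_square by (simp add: dft_ccorr[OF assms] mult.commute)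
  also have "\<dots> = of_nat N * idft N (dft N (ccorr N f f)) 0"
    using assms by (simp add: idft_def)
  also have "\<dots> = of_real (real N * (\<Sum>p<N. (f p)\<^sup>2))"
    using assms by (simp add: idft_dft ccorr_def power2_eq_square)
  finally show ?thesis
    by (simp only: of_real_eq_iff)
qed

lemma cconv_reflect_eq_ccorr: "cconv N (\<lambda>p. f ((N - p) mod N)) g d = ccorr N f g d"
proof -
  have "ccorr N f g d = (\<Sum>p<N. f ((N - p) mod N) * g (((N - p) mod N + d) mod N))"
    unfolding ccorr_def by (rule sum_mod_reflect[symmetric])
  also have "\<dots> = cconv N (\<lambda>p. f ((N - p) mod N)) g d"
    unfolding cconv_def by (intro sum.cong refl) (simp add: mod_add_left_eq mod_add_right_eq add.commute)
  finally show ?thesis ..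
qed

lemma dft_scaled_delta:
  assumes "0 < N"
  shows "dft N (\<lambda>d. if d = 0 then e else 0) k = of_real e"
proof -
  have "dft N (\<lambda>d. if d = 0 then e else 0) k = (\<Sum>p<N. if p = 0 then of_real e else 0)"
    unfolding dft_def by (rule sum.cong) auto
  then show ?thesis
    using assms by simp
qed

lemma sum_cnj_dft_mult_dft:
  assumes "0 < N"
    and "\<And>d. d < N \<Longrightarrow> (\<Sum>c\<in>C. ccorr N (f c) (g c) d) = (if d = 0 then e else 0)"
  shows "(\<Sum>c\<in>C. cnj (dft N (f c) k) * dft N (g c) k) = of_real e"
proof -
  have "(\<Sum>c\<in>C. cnj (dft N (f c) k) * dft N (g c) k) = dft N (\<lambda>d. \<Sum>c\<in>C. ccorr N (f c) (g c) d) k"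
    by (simp add: dft_sum dft_ccorr[OF assms(1)])
  also have "\<dots> = dft N (\<lambda>d. if d = 0 then e else 0) k"
    by (rule dft_cong) (simp add: assms(2))
  finally show ?thesis
    using dft_scaled_delta[OF assms(1)] by simp
qed

lemma sum_cmod_sum_orthonormal:
  fixes a :: "nat \<Rightarrow> 'c \<Rightarrow> complex" and b :: "nat \<Rightarrow> complex"
  assumes "\<And>i j. i < m \<Longrightarrow> j < m \<Longrightarrow> (\<Sum>c\<in>C. cnj (a i c) * a j c) = (if i = j then 1 else 0)"
  shows "(\<Sum>c\<in>C. (cmod (\<Sum>i<m. a i c * b i))\<^sup>2) = (\<Sum>i<m. (cmod (b i))\<^sup>2)"
proof -
  have "(\<Sum>c\<in>C. (\<Sum>i<m. a i c * b i) * cnj (\<Sum>j<m. a j c * b j))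
      = (\<Sum>c\<in>C. \<Sum>i<m. \<Sum>j<m. b i * cnj (b j) * (cnj (a j c) * a i c))"
    by (simp add: sum_product mult_ac)
  also have "\<dots> = (\<Sum>i<m. \<Sum>j<m. \<Sum>c\<in>C. b i * cnj (b j) * (cnj (a j c) * a i c))"
    by (subst sum.swap, rule sum.cong[OF refl], subst sum.swap) (rule refl)
  also have "\<dots> = (\<Sum>i<m. \<Sum>j<m. b i * cnj (b j) * (\<Sum>c\<in>C. cnj (a j c) * a i c))"
    by (simp add: sum_distrib_left)
  also have "\<dots> = (\<Sum>i<m. \<Sum>j<m. if j = i then b i * cnj (b j) else 0)"
    using assms by (intro sum.cong refl) simp
  also have "\<dots> = (\<Sum>i<m. b i * cnj (b i))"
    by simp
  finally show ?thesis
    unfolding of_real_eq_iff[where 'a = complex, symmetric] of_real_sum complex_norm_square .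
qed

lemma sum_cconv_squared_orthonormal:
  fixes A :: "nat \<Rightarrow> 'c \<Rightarrow> nat \<Rightarrow> real" and y :: "nat \<Rightarrow> nat \<Rightarrow> real"
  assumes "0 < N"
    and "\<And>i j d. i < m \<Longrightarrow> j < m \<Longrightarrow> d < N \<Longrightarrow>
      (\<Sum>c\<in>C. ccorr N (A i c) (A j c) d) = (if i = j \<and> d = 0 then 1 else 0)"
  shows "(\<Sum>c\<in>C. \<Sum>l<N. (\<Sum>i<m. cconv N (A i c) (y i) l)\<^sup>2)
    = (\<Sum>k<N. \<Sum>i<m. (cmod (dft N (y i) k))\<^sup>2) / real N"
proof -
  have parseval: "(\<Sum>l<N. (\<Sum>i<m. cconv N (A i c) (y i) l)\<^sup>2)
      = (\<Sum>k<N. (cmod (\<Sum>i<m. dft N (A i c) k * dft N (y i) k))\<^sup>2) / real N" for c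
    using sum_cmod_dft_squared[OF assms(1), of "\<lambda>l. \<Sum>i<m. cconv N (A i c) (y i) l"] assms(1)
    by (simp add: dft_sum dft_cconv)
  have orthonormal: "(\<Sum>c\<in>C. (cmod (\<Sum>i<m. dft N (A i c) k * dft N (y i) k))\<^sup>2)
      = (\<Sum>i<m. (cmod (dft N (y i) k))\<^sup>2)" for k
  proof (rule sum_cmod_sum_orthonormal)
    fix i j assume "i < m" "j < m"
    then show "(\<Sum>c\<in>C. cnj (dft N (A i c) k) * dft N (A j c) k) = (if i = j then 1 else 0)"
      using sum_cnj_dft_mult_dft[OF assms(1), where f = "A i" and g = "A j" and e = "if i = j then 1 else 0"] assms(2)
      by simp
  qed
  have "(\<Sum>c\<in>C. \<Sum>l<N. (\<Sum>i<m. cconv N (A i c) (y i) l)\<^sup>2)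
      = (\<Sum>c\<in>C. \<Sum>k<N. (cmod (\<Sum>i<m. dft N (A i c) k * dft N (y i) k))\<^sup>2) / real N"
    by (simp add: parseval sum_divide_distrib)
  also have "\<dots> = (\<Sum>k<N. \<Sum>c\<in>C. (cmod (\<Sum>i<m. dft N (A i c) k * dft N (y i) k))\<^sup>2) / real N"
    by (subst sum.swap) (rule refl)
  finally show ?thesis
    by (simp add: orthonormal)
qed

lemma fhat_eq_dft: "fhat N A i j = dft N (A i j)"
  by (simp add: fhat_def dft_def fun_eq_iff)

lemma ifft_eq_idft: "ifft N C i j l = Re (idft N (C i j) l)"
  by (simp add: ifft_def idft_def)

lemma tprod_eq_sum_cconv:
  assumes "l < N"
  shows "tprod N r A B i j l = (\<Sum>t<r. cconv N (A i t) (B t j) l)"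
proof -
  have "0 < N" using assms by simp
  have "idft N (\<lambda>k. dft N (A i t) k * dft N (B t j) k) l = idft N (dft N (cconv N (A i t) (B t j))) l" for t
    by (simp add: idft_def dft_cconv[OF \<open>0 < N\<close>])
  then show ?thesis
    using idft_dft[OF assms]
    by (simp add: tprod_def ifft_eq_idft fhat_eq_dft idft_sum)
qed

lemma ttrace_eq_sum_diagonal:
  assumes "l < N"
  shows "ttrace N q X l = (\<Sum>i<q. X i i l)"
  using assms by (simp add: ttrace_def ifft_eq_idft fhat_eq_dft idft_sum idft_dft)

lemma fhat_tid:
  assumes "0 < N"
  shows "fhat N tid a b k = (if a = b then 1 else 0)"
proof -
  have "fhat N tid a b k = (\<Sum>l<N. if l = 0 then (if a = b then 1 else 0) else 0)"
    unfolding fhat_def tid_def by (rule sum.cong) auto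
  then show ?thesis
    using assms by simp
qed

lemma tkron_tid:
  assumes "l < N"
  shows "tkron N s s Y tid i j l = (if i mod s = j mod s then Y (i div s) (j div s) l else 0)"
proof -
  have "0 < N" using assms by simp
  show ?thesis
  proof (cases "i mod s = j mod s")
    case True
    then show ?thesis
      by (simp add: tkron_def ifft_eq_idft fhat_tid[OF \<open>0 < N\<close>]) (simp add: fhat_eq_dft idft_dft[OF assms])
  next
    case False
    then show ?thesis
      by (simp add: tkron_def ifft_eq_idft fhat_tid[OF \<open>0 < N\<close>] idft_def)
  qed
qed

lemma tprod_tkron_tid:
  assumes "l < N" "b < s"
  shows "tprod N (m * s) V (tkron N s s Y tid) a b l = (\<Sum>i<m. cconv N (V a (i * s + b)) (Y i 0) l)"
proof -
  have kron: "cconv N (V a t) (tkron N s s Y tid t b) l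
      = (if t mod s = b then cconv N (V a t) (Y (t div s) 0) l else 0)" for t
    using assms by (simp add: cconv_def tkron_tid)
  have "tprod N (m * s) V (tkron N s s Y tid) a b l
      = (\<Sum>i<m. \<Sum>c<s. if c = b then cconv N (V a (i * s + c)) (Y i 0) l else 0)"
    using assms(2) by (simp add: tprod_eq_sum_cconv[OF assms(1)] kron sum_mult_product add.commute)
  also have "\<dots> = (\<Sum>i<m. cconv N (V a (i * s + b)) (Y i 0) l)"
    using assms(2) by simp
  finally show ?thesis .
qed

lemma tdiamond_eq_sum_ccorr:
  assumes "d < N"
  shows "tdiamond N n s V i j d = (\<Sum>b<s. \<Sum>a<n. ccorr N (V a (i * s + b)) (V a (j * s + b)) d)"
  using assms
  by (simp add: tdiamond_def tinner_def ttrace_eq_sum_diagonal tprod_eq_sum_cconv ttrans_def tblock_def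
      cconv_reflect_eq_ccorr)

theorem proposition9:
  fixes m n s n3 :: nat and Y V :: tensor
  assumes "0 < n3"
    and "\<forall>i<m. \<forall>j<m. \<forall>l<n3. tdiamond n3 n s V i j l = tid i j l"
  shows "frob n s n3 (tprod n3 (m * s) V (tkron n3 s s Y tid)) = tl2 m n3 Y"
proof -
  let ?A = "\<lambda>i c. V (fst c) (i * s + snd c)"
  have orthonormal: "(\<Sum>c\<in>{..<n} \<times> {..<s}. ccorr n3 (?A i c) (?A j c) d) = (if i = j \<and> d = 0 then 1 else 0)"
    if "i < m" "j < m" "d < n3" for i j d
  proof -
    have "(\<Sum>c\<in>{..<n} \<times> {..<s}. ccorr n3 (?A i c) (?A j c) d) = tdiamond n3 n s V i j d"
      by (simp add: sum.cartesian_product' tdiamond_eq_sum_ccorr[OF \<open>d < n3\<close>] sum.swap[of _ "{..<n}"])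
    then show ?thesis
      using assms(2) that by (simp add: tid_def)
  qed
  have "frob n s n3 (tprod n3 (m * s) V (tkron n3 s s Y tid))
      = sqrt (\<Sum>c\<in>{..<n} \<times> {..<s}. \<Sum>l<n3. (\<Sum>i<m. cconv n3 (?A i c) (Y i 0) l)\<^sup>2)"
    by (simp add: frob_def tprod_tkron_tid sum.cartesian_product')
  also have "\<dots> = sqrt ((\<Sum>k<n3. \<Sum>i<m. (cmod (dft n3 (Y i 0) k))\<^sup>2) / real n3)"
    using sum_cconv_squared_orthonormal[OF assms(1), where C = "{..<n} \<times> {..<s}" and A = ?A] orthonormal by simp
  also have "\<dots> = tl2 m n3 Y"
    by (simp add: tl2_def fhat_eq_dft real_sqrt_divide)
  finally show ?thesis .
qed

end
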